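(* If $G^c$ is a connected vertex-coloured graph with $n$ vertices and $c$ colours, where $n>c\ge1$, then $\gamma^t(G^c)\le \frac{n+c-1}{2}$.
   Context: A vertex-coloured graph $G^c$ with colour set $\{1,\dots,c\}$ is a finite simple graph in which every vertex receives exactly one colour and every colour appears on at least one vertex. A dominating set is tropical if every colour appears on at least one of its vertices; $\gamma^t(G^c)$ is the minimum size of a tropical dominating set. *)

theory Defs
  imports Complex_Main
begin

definition simple_graph :: "'a set \<Rightarrow> ('a \<Rightarrow> 'a \<Rightarrow> bool) \<Rightarrow> bool" where
  "simple_graph V E \<longleftrightarrow> finite V \<and> (\<forall>u v. E u v \<longrightarrow> u \<in> V \<and> v \<in> V)
     \<and> (\<forall>u v. E u v \<longrightarrow> E v u) \<and> (\<forall>v. \<not> E v v)"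

definition connected_graph :: "'a set \<Rightarrow> ('a \<Rightarrow> 'a \<Rightarrow> bool) \<Rightarrow> bool" where
  "connected_graph V E \<longleftrightarrow> V \<noteq> {} \<and> (\<forall>u\<in>V. \<forall>v\<in>V. E\<^sup>*\<^sup>* u v)"

definition vertex_colouring :: "'a set \<Rightarrow> ('a \<Rightarrow> nat) \<Rightarrow> nat \<Rightarrow> bool" where
  "vertex_colouring V col c \<longleftrightarrow> col ` V = {1..c}"

definition dominating_set :: "'a set \<Rightarrow> ('a \<Rightarrow> 'a \<Rightarrow> bool) \<Rightarrow> 'a set \<Rightarrow> bool" where
  "dominating_set V E D \<longleftrightarrow> D \<subseteq> V \<and> (\<forall>v\<in>V. v \<in> D \<or> (\<exists>u\<in>D. E u v))"

definition tropical_dominating_set ::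
  "'a set \<Rightarrow> ('a \<Rightarrow> 'a \<Rightarrow> bool) \<Rightarrow> ('a \<Rightarrow> nat) \<Rightarrow> nat \<Rightarrow> 'a set \<Rightarrow> bool" where
  "tropical_dominating_set V E col c D \<longleftrightarrow> dominating_set V E D \<and> {1..c} \<subseteq> col ` D"

definition tropical_domination_number ::
  "'a set \<Rightarrow> ('a \<Rightarrow> 'a \<Rightarrow> bool) \<Rightarrow> ('a \<Rightarrow> nat) \<Rightarrow> nat \<Rightarrow> nat" where
  "tropical_domination_number V E col c =
     (LEAST k. \<exists>D. tropical_dominating_set V E col c D \<and> card D = k)"

end

theory Submission
  imports Defs
begin

text \<open>Induction on the number of vertices, for the strengthened claim that a connected graph
  with fewer colours than vertices has a dominating set of size at most (n + c - 1)/2 meeting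
  every colour, c being the number of colours used. A breadth-first search from any vertex either
  finds a dominating vertex, which together with one representative of each other colour already
  suffices, or splits off a star with centre u whose removal leaves a connected graph on at least
  two vertices. A small dominating set of the rest, given by induction, is then completed on the
  star either by u and representatives of the colours missing from the rest, or by the leaves of
  the star. If the rest is rainbow, induction is unavailable; the rest itself is used instead,
  after dropping one vertex of u's colour when that colour occurs there.\<close>

definition induced :: "('a \<Rightarrow> 'a \<Rightarrow> bool) \<Rightarrow> 'a set \<Rightarrow> 'a \<Rightarrow> 'a \<Rightarrow> bool" where
  "induced E W = (\<lambda>x y. E x y \<and> x \<in> W \<and> y \<in> W)"

lemma simple_graph_induced: "simple_graph V E \<Longrightarrow> W \<subseteq> V \<Longrightarrow> simple_graph W (induced E W)"
  unfolding simple_graph_def induced_def by (auto intro: finite_subset)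

lemma simple_graph_finite: "simple_graph V E \<Longrightarrow> finite V"
  unfolding simple_graph_def by blast

lemma simple_graph_edgeD: "simple_graph V E \<Longrightarrow> E u v \<Longrightarrow> u \<in> V \<and> v \<in> V"
  unfolding simple_graph_def by blast

lemma simple_graph_symp: "simple_graph V E \<Longrightarrow> symp E"
  unfolding simple_graph_def by (auto intro: sympI)

lemma connected_graph_has_neighbour:
  assumes "connected_graph V E" "card V \<ge> 2" "x \<in> V"
  obtains y where "E x y"
proof -
  have "V \<noteq> {x}" using assms(2) by auto
  then obtain y where "y \<in> V" "y \<noteq> x" using assms(3) by blast
  moreover have "E\<^sup>*\<^sup>* x y" using assms(1,3) \<open>y \<in> V\<close> unfolding connected_graph_def by blast
  ultimately show thesis using that by (auto elim: converse_rtranclpE)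
qed

lemma dominating_set_Diff_singleton:
  assumes "simple_graph V E" "connected_graph V E" "card V \<ge> 2" "x \<in> V"
  shows "dominating_set V E (V - {x})"
proof -
  obtain y where "E x y" using assms(2-4) by (rule connected_graph_has_neighbour)
  then have "y \<in> V - {x}" "E y x" using assms(1) unfolding simple_graph_def by auto
  then show ?thesis unfolding dominating_set_def by auto
qed

lemma dominating_set_Un_induced:
  assumes "dominating_set W (induced E W) B" "T \<subseteq> S" "\<forall>x\<in>S. x \<in> T \<or> (\<exists>y\<in>T. E y x)"
  shows "dominating_set (W \<union> S) E (B \<union> T)"
  using assms unfolding dominating_set_def induced_def by blast

lemma exists_colour_representatives:
  assumes "C \<subseteq> col ` V"
  obtains R where "R \<subseteq> V" "col ` R = C" "card R = card C"
proof -
  have "\<forall>a\<in>C. \<exists>v. v \<in> V \<and> col v = a" using assms by blast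
  then obtain f where f: "\<forall>a\<in>C. f a \<in> V \<and> col (f a) = a" by (rule bchoice[elim_format]) blast
  then have "inj_on f C" by (intro inj_onI) metis
  moreover have "col ` f ` C = C" using f by (auto simp: image_image)
  moreover have "f ` C \<subseteq> V" using f by auto
  ultimately show thesis by (intro that[of "f ` C"]) (simp_all add: card_image)
qed

definition hop_dist :: "('a \<Rightarrow> 'a \<Rightarrow> bool) \<Rightarrow> 'a \<Rightarrow> 'a \<Rightarrow> nat" where
  "hop_dist E r v = (LEAST k. (E ^^ k) r v)"

lemma hop_dist_walk:
  assumes "E\<^sup>*\<^sup>* r v" shows "(E ^^ hop_dist E r v) r v"
proof -
  obtain k where "(E ^^ k) r v" using assms by (auto simp: rtranclp_power)
  then show ?thesis unfolding hop_dist_def by (rule LeastI)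
qed

lemma hop_dist_le: "(E ^^ k) r v \<Longrightarrow> hop_dist E r v \<le> k"
  unfolding hop_dist_def by (rule Least_le)

lemma hop_dist_self: "hop_dist E r r = 0"
proof -
  have "(E ^^ 0) r r" by simp
  then show ?thesis using hop_dist_le by fastforce
qed

lemma hop_dist_eq_0: "E\<^sup>*\<^sup>* r v \<Longrightarrow> hop_dist E r v = 0 \<Longrightarrow> v = r"
  using hop_dist_walk[of E r v] by simp

lemma hop_dist_predecessor:
  assumes "E\<^sup>*\<^sup>* r y" "hop_dist E r y = Suc j"
  obtains p where "E p y" "E\<^sup>*\<^sup>* r p" "hop_dist E r p = j"
proof -
  have "(E ^^ Suc j) r y" using hop_dist_walk[OF assms(1)] assms(2) by simp
  then obtain p where p: "(E ^^ j) r p" "E p y" by (rule relpowp_Suc_E)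
  have rp: "E\<^sup>*\<^sup>* r p" using p(1) by (auto simp: rtranclp_power)
  have "(E ^^ Suc (hop_dist E r p)) r y" by (rule relpowp_Suc_I[OF hop_dist_walk[OF rp] p(2)])
  then have "Suc j \<le> Suc (hop_dist E r p)" using assms(2) hop_dist_le by fastforce
  with hop_dist_le[OF p(1)] show thesis using that[OF p(2) rp] by simp
qed

lemma hop_dist_le_1_adjacent:
  assumes "E\<^sup>*\<^sup>* r y" "hop_dist E r y \<le> 1" "y \<noteq> r"
  shows "E r y"
proof -
  have "hop_dist E r y \<noteq> 0" using hop_dist_eq_0[OF assms(1)] assms(3) by auto
  then have "hop_dist E r y = Suc 0" using assms(2) by linarith
  then obtain p where p: "E p y" "E\<^sup>*\<^sup>* r p" "hop_dist E r p = 0"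
    by (rule hop_dist_predecessor[OF assms(1)])
  have "p = r" using hop_dist_eq_0[OF p(2,3)] .
  then show ?thesis using p(1) by simp
qed

lemma connected_graph_induced_descent:
  fixes f :: "'a \<Rightarrow> nat"
  assumes "symp E" "r \<in> W" "\<And>y. y \<in> W \<Longrightarrow> y \<noteq> r \<Longrightarrow> \<exists>q\<in>W. E q y \<and> f q < f y"
  shows "connected_graph W (induced E W)"
proof -
  have to_r: "(induced E W)\<^sup>*\<^sup>* y r" if "y \<in> W" for y
    using that
  proof (induction "f y" arbitrary: y rule: less_induct)
    case less
    show ?case
    proof (cases "y = r")
      case False
      then obtain q where "q \<in> W" "E q y" "f q < f y" using assms(3) less.prems by blast
      then have "induced E W y q" using assms(1) less.prems unfolding induced_def by (blast dest: sympD)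
      then show ?thesis
        using less.hyps[OF \<open>f q < f y\<close> \<open>q \<in> W\<close>] by (rule converse_rtranclp_into_rtranclp)
    qed simp
  qed
  have "symp (induced E W)" using assms(1) unfolding induced_def by (auto intro: sympI dest: sympD)
  then have "(induced E W)\<^sup>*\<^sup>* r y" if "y \<in> W" for y
    using to_r[OF that] by (blast dest: sympD[OF symp_rtranclp])
  then show ?thesis using to_r assms(2) unfolding connected_graph_def by (blast intro: rtranclp_trans)
qed

lemma connected_graph_Diff_outer_star:
  assumes sg: "simple_graph V E" and cg: "connected_graph V E" and r: "r \<in> V" and u: "u \<in> V"
    and far: "\<forall>y\<in>V. hop_dist E r y \<le> m" and du: "Suc (hop_dist E r u) = m" and m: "2 \<le> m"
  defines "W \<equiv> V - insert u {x \<in> V. E u x \<and> hop_dist E r x = m}"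
  shows "connected_graph W (induced E W)"
proof (rule connected_graph_induced_descent)
  show "symp E" using sg by (rule simple_graph_symp)
  have "hop_dist E r r = 0" by (rule hop_dist_self)
  then show "r \<in> W" using r du m unfolding W_def by auto
  fix y assume y: "y \<in> W" "y \<noteq> r"
  have reach: "E\<^sup>*\<^sup>* r y" using cg r y(1) unfolding connected_graph_def W_def by blast
  have "hop_dist E r y \<noteq> 0" using hop_dist_eq_0[OF reach] y(2) by auto
  then obtain j where j: "hop_dist E r y = Suc j" using not0_implies_Suc by blast
  then obtain q where q: "E q y" "hop_dist E r q = j" by (rule hop_dist_predecessor[OF reach])
  have "q \<in> V" using simple_graph_edgeD[OF sg q(1)] by blast
  moreover have "q \<noteq> u" using y(1) q j du unfolding W_def by auto
  moreover have "hop_dist E r y \<le> m" using far y(1) unfolding W_def by auto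
  ultimately have "q \<in> W" using q(2) j unfolding W_def by auto
  then show "\<exists>q\<in>W. E q y \<and> hop_dist E r q < hop_dist E r y" using q j by auto
qed

text \<open>The split comes from breadth-first layers around a vertex r: u is the parent of a farthest
  vertex and L consists of its children in the last layer. If only r survives the removal of u
  and L, then u is adjacent to everything.\<close>
lemma dominating_vertex_or_outer_star:
  assumes sg: "simple_graph V E" and cg: "connected_graph V E"
  obtains (dominating_vertex) x where "x \<in> V" "\<forall>y\<in>V. y \<noteq> x \<longrightarrow> E x y"
  | (outer_star) u L where "u \<in> V" "L \<subseteq> V" "L \<noteq> {}" "u \<notin> L" "\<forall>l\<in>L. E u l"
      "card (V - insert u L) \<ge> 2" "connected_graph (V - insert u L) (induced E (V - insert u L))"
proof -
  have fin: "finite V" using sg by (rule simple_graph_finite)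
  obtain r where r: "r \<in> V" using cg unfolding connected_graph_def by auto
  define d where "d = hop_dist E r"
  have reach: "E\<^sup>*\<^sup>* r y" if "y \<in> V" for y using cg r that unfolding connected_graph_def by blast
  have pred: "\<exists>q\<in>V. E q y \<and> d q = j" if "y \<in> V" "d y = Suc j" for y j
    by (rule hop_dist_predecessor[OF reach[OF that(1)] that(2)[unfolded d_def]])
      (use simple_graph_edgeD[OF sg] in \<open>auto simp: d_def\<close>)
  define m where "m = Max (d ` V)"
  have far: "\<forall>y\<in>V. d y \<le> m" using fin unfolding m_def by simp
  have "m \<in> d ` V" unfolding m_def using fin r by (intro Max_in) auto
  then obtain v where v: "v \<in> V" "d v = m" by auto
  show thesis
  proof (cases "m \<le> 1")
    case True
    have "E r y" if "y \<in> V" "y \<noteq> r" for y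
    proof -
      have "d y \<le> 1" using far that(1) True by auto
      then show ?thesis using hop_dist_le_1_adjacent[OF reach[OF that(1)] _ that(2)] by (simp add: d_def)
    qed
    then show thesis using r dominating_vertex by blast
  next
    case False
    have "d v = Suc (m - 1)" using v(2) False by simp
    then obtain u where u: "u \<in> V" "E u v" "d u = m - 1" using pred[OF v(1)] by blast
    have "d u = Suc (m - 2)" using u(3) False by simp
    then obtain p where p: "p \<in> V" "E p u" "d p = m - 2" using pred[OF u(1)] by blast
    define L where "L = {x \<in> V. E u x \<and> d x = m}"
    define W where "W = V - insert u L"
    have L: "L \<subseteq> V" "v \<in> L" "u \<notin> L" "\<forall>l\<in>L. E u l" using u v False unfolding L_def by auto
    have "connected_graph W (induced E W)"
      unfolding W_def L_def d_def
      by (rule connected_graph_Diff_outer_star[OF sg cg r u(1)]) (use far u False in \<open>auto simp: d_def\<close>)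
    moreover have "p \<in> W" "r \<in> W" using p r u False hop_dist_self[of E r] unfolding W_def L_def d_def by auto
    moreover have "finite W" using fin unfolding W_def by auto
    ultimately show thesis
    proof (cases "card W \<ge> 2")
      case True
      then show thesis using outer_star[OF u(1) L(1)] L \<open>connected_graph W (induced E W)\<close>
        unfolding W_def by blast
    next
      case False
      with \<open>finite W\<close> \<open>p \<in> W\<close> \<open>r \<in> W\<close> have "p = r" "W \<subseteq> {r}"
        using card_le_Suc0_iff_eq[of W] by auto
      have "E u y" if "y \<in> V" "y \<noteq> u" for y
        using that \<open>p = r\<close> \<open>W \<subseteq> {r}\<close> sympD[OF simple_graph_symp[OF sg] p(2)] L(4)
        unfolding W_def by auto
      then show thesis using u(1) dominating_vertex by blast
    qed
  qed
qed

text \<open>Only the colours actually occurring in V are counted, so that the notion passes to induced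
  subgraphs; for a colouring onto {1..c} the bound is 2|D| \<le> n + c - 1.\<close>
definition small_tropical_dominating_set ::
  "'a set \<Rightarrow> ('a \<Rightarrow> 'a \<Rightarrow> bool) \<Rightarrow> ('a \<Rightarrow> nat) \<Rightarrow> 'a set \<Rightarrow> bool" where
  "small_tropical_dominating_set V E col D \<longleftrightarrow>
     dominating_set V E D \<and> col ` V \<subseteq> col ` D \<and> 2 * card D + 1 \<le> card V + card (col ` V)"

lemma small_tropical_dominating_set_dominating_vertex:
  assumes fin: "finite V" and x: "x \<in> V" "\<forall>y\<in>V. y \<noteq> x \<longrightarrow> E x y"
    and fewer_colours: "card (col ` V) < card V"
  shows "\<exists>D. small_tropical_dominating_set V E col D"
proof -
  obtain R where R: "R \<subseteq> V" "col ` R = col ` V - {col x}" "card R = card (col ` V - {col x})"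
    by (rule exists_colour_representatives[of "col ` V - {col x}" col V]) auto
  have "Suc (card (col ` V - {col x})) = card (col ` V)"
    using fin x(1) by (intro card_Suc_Diff1) auto
  moreover have "card (insert x R) \<le> Suc (card R)"
    using finite_subset[OF R(1) fin] by (simp add: card_insert_if)
  ultimately have "2 * card (insert x R) + 1 \<le> card V + card (col ` V)"
    using R(3) fewer_colours by linarith
  moreover have "dominating_set V E (insert x R)" using x R(1) unfolding dominating_set_def by auto
  moreover have "col ` V \<subseteq> col ` insert x R" using R(2) by auto
  ultimately show ?thesis unfolding small_tropical_dominating_set_def by blast
qed

locale coloured_outer_star =
  fixes V :: "'a set" and E :: "'a \<Rightarrow> 'a \<Rightarrow> bool" and col :: "'a \<Rightarrow> nat" and u :: 'a and L :: "'a set"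
  assumes simple: "simple_graph V E"
    and centre: "u \<in> V" and leaves: "L \<subseteq> V" "L \<noteq> {}" "u \<notin> L" "\<forall>l\<in>L. E u l"
    and rest_card: "card (V - insert u L) \<ge> 2"
    and rest_connected: "connected_graph (V - insert u L) (induced E (V - insert u L))"
begin

definition star :: "'a set" where "star = insert u L"

definition rest :: "'a set" where "rest = V - star"

definition new_colours :: "nat set" where "new_colours = col ` V - col ` rest"

lemma finite_V: "finite V"
  using simple by (rule simple_graph_finite)

lemma V_eq: "V = rest \<union> star" and rest_subset: "rest \<subseteq> V" and star_subset: "star \<subseteq> V"
  using centre leaves(1) unfolding rest_def star_def by auto

lemma card_V: "card V = card rest + card star"
proof -
  have "card (rest \<union> star) = card rest + card star"
    using finite_subset[OF rest_subset finite_V] finite_subset[OF star_subset finite_V]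
    by (intro card_Un_disjoint) (auto simp: rest_def)
  then show ?thesis using V_eq by simp
qed

lemma card_star: "card star = Suc (card L)"
  using leaves(1,3) finite_subset[OF _ finite_V] unfolding star_def by simp

lemma card_colours: "card (col ` V) = card (col ` rest) + card new_colours"
proof -
  have "col ` rest \<subseteq> col ` V" using rest_subset by auto
  then show ?thesis
    unfolding new_colours_def using finite_V by (metis card_Diff_subset card_mono finite_imageI
        finite_subset le_add_diff_inverse)
qed

lemma new_colours_subset: "new_colours \<subseteq> col ` star"
  using V_eq unfolding new_colours_def by auto

lemma card_new_colours: "card new_colours \<le> card star"
  using new_colours_subset finite_subset[OF star_subset finite_V]
  by (meson card_image_le card_mono finite_imageI le_trans)

lemma star_dominated_by_centre: "u \<in> X \<Longrightarrow> \<forall>x\<in>star. x \<in> X \<or> (\<exists>y\<in>X. E y x)"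
  using leaves(4) unfolding star_def by auto

lemma star_dominated_by_leaves: "\<forall>x\<in>star. x \<in> L \<or> (\<exists>y\<in>L. E y x)"
proof -
  obtain l where "l \<in> L" using leaves(2) by blast
  then have "E l u" using leaves(4) sympD[OF simple_graph_symp[OF simple]] by blast
  then show ?thesis using \<open>l \<in> L\<close> unfolding star_def by auto
qed

lemma small_tropical_dominating_set_extend:
  assumes "dominating_set rest (induced E rest) B" "X \<subseteq> star" "\<forall>x\<in>star. x \<in> X \<or> (\<exists>y\<in>X. E y x)"
    and "col ` V \<subseteq> col ` B \<union> col ` X" "2 * (card B + card X) + 1 \<le> card V + card (col ` V)"
  shows "\<exists>D. small_tropical_dominating_set V E col D"
proof -
  have "dominating_set V E (B \<union> X)"
    using dominating_set_Un_induced[OF assms(1-3)] V_eq by simp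
  moreover have "card (B \<union> X) \<le> card B + card X" by (rule card_Un_le)
  ultimately show ?thesis
    using assms(4,5) unfolding small_tropical_dominating_set_def by (intro exI[of _ "B \<union> X"]) auto
qed

lemma centre_with_representatives:
  obtains T where "u \<in> T" "T \<subseteq> star" "new_colours \<subseteq> col ` T" "card T \<le> card new_colours + 1"
    "col u \<in> new_colours \<longrightarrow> card T \<le> card new_colours"
proof -
  obtain R where R: "R \<subseteq> star" "col ` R = new_colours - {col u}" "card R = card (new_colours - {col u})"
    by (rule exists_colour_representatives[of "new_colours - {col u}" col star])
      (use new_colours_subset in auto)
  have fin: "finite new_colours" using finite_V unfolding new_colours_def by blast
  have card_T: "card (insert u R) \<le> Suc (card R)"
    using finite_subset[OF R(1)] finite_subset[OF star_subset finite_V] by (simp add: card_insert_if)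
  have "col u \<in> new_colours \<Longrightarrow> Suc (card R) = card new_colours"
    using R(3) fin card_Suc_Diff1 by metis
  moreover have "card R \<le> card new_colours" using R(3) fin by (simp add: card_Diff1_le)
  moreover have "new_colours \<subseteq> col ` insert u R" using R(2) by auto
  moreover have "insert u R \<subseteq> star" using R(1) unfolding star_def by auto
  ultimately show thesis using card_T by (intro that[of "insert u R"]) auto
qed

lemma colours_V: "col ` V = col ` rest \<union> new_colours"
  using rest_subset unfolding new_colours_def by auto

lemma small_tropical_dominating_set_from_rest:
  assumes "small_tropical_dominating_set rest (induced E rest) col B"
  shows "\<exists>D. small_tropical_dominating_set V E col D"
proof -
  have B: "dominating_set rest (induced E rest) B" "col ` rest \<subseteq> col ` B"
    "2 * card B + 1 \<le> card rest + card (col ` rest)"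
    using assms unfolding small_tropical_dominating_set_def by auto
  obtain T where T: "u \<in> T" "T \<subseteq> star" "new_colours \<subseteq> col ` T" "card T \<le> card new_colours + 1"
    "col u \<in> new_colours \<longrightarrow> card T \<le> card new_colours"
    by (rule centre_with_representatives)
  show ?thesis
  proof (cases "col u \<in> new_colours \<or> card new_colours + 2 \<le> card star")
    case True
    then have "2 * card T \<le> card star + card new_colours" using T(4,5) card_new_colours by auto
    then show ?thesis
      using B T(2,3) star_dominated_by_centre[OF T(1)] colours_V card_V card_colours
      by (intro small_tropical_dominating_set_extend[of B T]) auto
  next
    case False
    then have "new_colours \<subseteq> col ` L" using new_colours_subset unfolding star_def by auto
    moreover have "2 * card L \<le> card star + card new_colours" using False card_star by auto
    moreover have "L \<subseteq> star" unfolding star_def by auto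
    ultimately show ?thesis
      using B star_dominated_by_leaves colours_V card_V card_colours
      by (intro small_tropical_dominating_set_extend[of B L]) auto
  qed
qed

lemma small_tropical_dominating_set_rainbow_rest:
  assumes rainbow: "card (col ` rest) = card rest" and fewer_colours: "card (col ` V) < card V"
  shows "\<exists>D. small_tropical_dominating_set V E col D"
proof -
  obtain T where T: "u \<in> T" "T \<subseteq> star" "new_colours \<subseteq> col ` T" "card T \<le> card new_colours + 1"
    "col u \<in> new_colours \<longrightarrow> card T \<le> card new_colours"
    by (rule centre_with_representatives)
  have few_new: "card new_colours < card star"
    using fewer_colours rainbow card_V card_colours by linarith
  show ?thesis
  proof (cases "col u \<in> new_colours")
    case True
    have "dominating_set rest (induced E rest) rest" unfolding dominating_set_def by auto
    then show ?thesis
      using True T(2-5) star_dominated_by_centre[OF T(1)] colours_V card_V card_colours rainbow few_new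
      by (intro small_tropical_dominating_set_extend[of rest T]) auto
  next
    case False
    then have "col u \<in> col ` rest" using colours_V imageI[OF centre, of col] by auto
    then obtain x where x: "x \<in> rest" "col x = col u" by (metis imageE)
    have "dominating_set rest (induced E rest) (rest - {x})"
      by (rule dominating_set_Diff_singleton[OF simple_graph_induced[OF simple rest_subset]])
        (use rest_card rest_connected x(1) in \<open>simp_all add: rest_def star_def\<close>)
    moreover have "Suc (card (rest - {x})) = card rest"
      using x(1) finite_subset[OF rest_subset finite_V] by (intro card_Suc_Diff1)
    moreover have "col ` rest \<subseteq> col ` (rest - {x}) \<union> col ` T" using x T(1) by auto
    ultimately show ?thesis
      using T(2-4) star_dominated_by_centre[OF T(1)] colours_V card_V card_colours rainbow few_new
      by (intro small_tropical_dominating_set_extend[of "rest - {x}" T]) auto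
  qed
qed

lemma small_tropical_dominating_set_by_rest:
  assumes "card (col ` V) < card V"
    and "card (col ` rest) < card rest \<Longrightarrow> \<exists>B. small_tropical_dominating_set rest (induced E rest) col B"
  shows "\<exists>D. small_tropical_dominating_set V E col D"
proof (cases "card (col ` rest) < card rest")
  case True
  then show ?thesis using assms(2) small_tropical_dominating_set_from_rest by blast
next
  case False
  moreover have "card (col ` rest) \<le> card rest"
    using finite_subset[OF rest_subset finite_V] by (rule card_image_le)
  ultimately have "card (col ` rest) = card rest" by linarith
  then show ?thesis using small_tropical_dominating_set_rainbow_rest assms(1) by blast
qed

end

lemma small_tropical_dominating_set_exists:
  assumes "simple_graph V E" "connected_graph V E" "card (col ` V) < card V"
  shows "\<exists>D. small_tropical_dominating_set V E col D"
  using assms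
proof (induction "card V" arbitrary: V E rule: less_induct)
  case less
  from less.prems(1,2) show ?case
  proof (cases rule: dominating_vertex_or_outer_star)
    case (dominating_vertex x)
    moreover have "finite V" using less.prems(1) by (rule simple_graph_finite)
    ultimately show ?thesis
      using small_tropical_dominating_set_dominating_vertex[OF _ _ _ less.prems(3)] by blast
  next
    case (outer_star u L)
    then interpret coloured_outer_star V E col u L using less.prems(1) by unfold_locales
    show ?thesis
    proof (rule small_tropical_dominating_set_by_rest[OF less.prems(3)])
      have "card rest < card V" using card_V card_star by simp
      moreover have "simple_graph rest (induced E rest)" by (rule simple_graph_induced[OF simple rest_subset])
      moreover have "connected_graph rest (induced E rest)" using rest_connected by (simp add: rest_def star_def)
      ultimately show "\<exists>B. small_tropical_dominating_set rest (induced E rest) col B"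
        if "card (col ` rest) < card rest" using less.hyps[OF _ _ _ that] by blast
    qed
  qed
qed

theorem mainTheorem4:
  fixes V :: "'a set" and E :: "'a \<Rightarrow> 'a \<Rightarrow> bool" and col :: "'a \<Rightarrow> nat"
    and n c :: nat
  assumes "simple_graph V E"
    and "connected_graph V E"
    and "vertex_colouring V col c"
    and "card V = n"
    and "n > c" and "c \<ge> 1"
  shows "real (tropical_domination_number V E col c) \<le> (real n + real c - 1) / 2"
proof -
  have colours: "col ` V = {1..c}" using assms(3) unfolding vertex_colouring_def .
  then have "card (col ` V) < card V" using assms(4,5) by simp
  then obtain D where D: "small_tropical_dominating_set V E col D"
    using small_tropical_dominating_set_exists[OF assms(1,2)] by blast
  then have "tropical_dominating_set V E col c D"
    using colours unfolding small_tropical_dominating_set_def tropical_dominating_set_def by simp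
  then have "\<exists>D'. tropical_dominating_set V E col c D' \<and> card D' = card D" by blast
  then have "tropical_domination_number V E col c \<le> card D"
    unfolding tropical_domination_number_def by (rule Least_le)
  moreover have "2 * card D + 1 \<le> n + c"
    using D colours assms(4) unfolding small_tropical_dominating_set_def by simp
  ultimately have "2 * real (tropical_domination_number V E col c) + 1 \<le> real n + real c" by linarith
  then show ?thesis by simp
qed

end
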